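(* Let $S\ni h$ be a $2$-admissible polarized lattice with $h^2=8$, $\Delta$ a Weyl chamber for $\operatorname{rt}(S,h)$, $\Gamma=\operatorname{Fn}_\Delta(S,h)$, and $v_1,v_2\in\Gamma$ two distinct vertices. Then the induced subgraph $\operatorname{Star}(v_1)\cap\operatorname{Star}(v_2)$ has no edges, and: (1) if $v_1\cdot v_2=1$, then $|\operatorname{Star}(v_1)\cap\operatorname{Star}(v_2)|\le1$; (2) if $v_1\cdot v_2=0$, then $|\operatorname{Star}(v_1)\cap\operatorname{Star}(v_2)|\le3$. If, in addition, $S\ni h$ is $3$-admissible, then both inequalities are strict.
   Context: All lattices even; $(S,h)$ polarized: $S$ hyperbolic, $h^2>0$. $\operatorname{root}_n(S,h)=\{r: r^2=-2,\ r\cdot h=n\}$, $\operatorname{rt}(S,h)$ spanned by $\operatorname{root}_0(S,h)$; a Weyl chamber $\Delta$ has simple roots $\mathfrak{b}(\Delta)$. $\Gamma=\operatorname{Fn}_\Delta(S,h)=\{l\in\operatorname{root}_1(S,h): l\cdot e\ge0\ \forall e\in\mathfrak{b}(\Delta)\}$, with edges of multiplicity $l_1\cdot l_2$. $\operatorname{Star}(v)=\{l\in\Gamma: l\cdot v=1\}$. $w$ is $m$-isotropic if $w^2=0$, $w\cdot h=m$; $2$-admissible: no $1$- or $2$-isotropic vector; $3$-admissible: in addition no $3$-isotropic vector. *)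

theory Defs
  imports "HOL-Analysis.Analysis"
begin

text \<open>A lattice of rank CARD('n) is modelled as int^'n with an integer Gram matrix G.\<close>

definition bil :: "int^'n^'n \<Rightarrow> int^'n \<Rightarrow> int^'n \<Rightarrow> int" where
  "bil G x y = (\<Sum>i\<in>UNIV. \<Sum>j\<in>UNIV. x$i * G$i$j * y$j)"

definition bilR :: "int^'n^'n \<Rightarrow> real^'n \<Rightarrow> real^'n \<Rightarrow> real" where
  "bilR G x y = (\<Sum>i\<in>UNIV. \<Sum>j\<in>UNIV. x$i * of_int (G$i$j) * y$j)"

definition ivec :: "int^'n \<Rightarrow> real^'n" where
  "ivec x = (\<chi> i. of_int (x$i))"

definition even_lattice :: "int^'n^'n \<Rightarrow> bool" where
  "even_lattice G \<longleftrightarrow> (\<forall>i j. G$i$j = G$j$i) \<and> (\<forall>i. even (G$i$i)) \<and> det G \<noteq> 0"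

text \<open>Hyperbolic: signature (1, rank-1), i.e. nondegenerate with positive inertia index 1:
  there is a positive vector, and there is no 2-dimensional real subspace on which the
  form is positive definite.\<close>
definition hyperbolic :: "int^'n^'n \<Rightarrow> bool" where
  "hyperbolic G \<longleftrightarrow> even_lattice G \<and> (\<exists>v. bilR G v v > 0) \<and>
     \<not> (\<exists>u w. \<not> dependent {u, w} \<and> u \<noteq> w \<and>
            (\<forall>a b. (a, b) \<noteq> (0::real, 0::real) \<longrightarrow>
               bilR G (a *\<^sub>R u + b *\<^sub>R w) (a *\<^sub>R u + b *\<^sub>R w) > 0))"

definition polarized :: "int^'n^'n \<Rightarrow> int^'n \<Rightarrow> bool" where
  "polarized G h \<longleftrightarrow> hyperbolic G \<and> bil G h h > 0"

definition root :: "int^'n^'n \<Rightarrow> int^'n \<Rightarrow> int \<Rightarrow> (int^'n) set" where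
  "root G h n = {r. bil G r r = -2 \<and> bil G r h = n}"

definition isotropic :: "int^'n^'n \<Rightarrow> int^'n \<Rightarrow> int \<Rightarrow> int^'n \<Rightarrow> bool" where
  "isotropic G h m w \<longleftrightarrow> bil G w w = 0 \<and> bil G w h = m"

definition admissible2 :: "int^'n^'n \<Rightarrow> int^'n \<Rightarrow> bool" where
  "admissible2 G h \<longleftrightarrow> (\<nexists>w. isotropic G h 1 w) \<and> (\<nexists>w. isotropic G h 2 w)"

definition admissible3 :: "int^'n^'n \<Rightarrow> int^'n \<Rightarrow> bool" where
  "admissible3 G h \<longleftrightarrow> admissible2 G h \<and> (\<nexists>w. isotropic G h 3 w)"

text \<open>Weyl chambers of rt(S,h) (a root system in h-perp tensor R) are parametrized by
  generic vectors c in h-perp tensor R, i.e. c orthogonal to no root in root_0; the chamber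
  is the one containing c.\<close>
definition weyl_generic :: "int^'n^'n \<Rightarrow> int^'n \<Rightarrow> real^'n \<Rightarrow> bool" where
  "weyl_generic G h c \<longleftrightarrow> bilR G c (ivec h) = 0 \<and> (\<forall>r\<in>root G h 0. bilR G c (ivec r) \<noteq> 0)"

definition pos_roots :: "int^'n^'n \<Rightarrow> int^'n \<Rightarrow> real^'n \<Rightarrow> (int^'n) set" where
  "pos_roots G h c = {r \<in> root G h 0. bilR G c (ivec r) > 0}"

definition simple_roots :: "int^'n^'n \<Rightarrow> int^'n \<Rightarrow> real^'n \<Rightarrow> (int^'n) set" where
  "simple_roots G h c = {e \<in> pos_roots G h c.
      \<not> (\<exists>a\<in>pos_roots G h c. \<exists>b\<in>pos_roots G h c. e = a + b)}"

definition Fn :: "int^'n^'n \<Rightarrow> int^'n \<Rightarrow> real^'n \<Rightarrow> (int^'n) set" where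
  "Fn G h c = {l \<in> root G h 1. \<forall>e\<in>simple_roots G h c. bil G l e \<ge> 0}"

definition Star :: "int^'n^'n \<Rightarrow> int^'n \<Rightarrow> real^'n \<Rightarrow> int^'n \<Rightarrow> (int^'n) set" where
  "Star G h c v = {l \<in> Fn G h c. bil G l v = 1}"

end

theory Submission
  imports Defs
begin

text \<open>
  By the Hodge index theorem, 8 x^2 \<le> (x.h)^2 for every x in S, with equality only if
  8 x = (x.h) h.  Applied to v1 + v2 and to sums of v1, v2 and common neighbours l of them, it
  bounds the products l.l' (which are nonnegative for distinct vertices of Fn) and the number of
  common neighbours: each extremal configuration (an edge l.l' = 1, two common neighbours of
  adjacent vertices, four of non-adjacent ones) attains equality, so the sum is a multiple of h,
  which contradicts its product with a common neighbour.  Under 3-admissibility the vectors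
  v1 + v2 + l, resp. h - (v1 + v2 + l1 + l2 + l3), would be 3-isotropic.

  Distinct vertices l, l' of Fn satisfy l.l' \<ge> 0: otherwise l - l' is a root of rt(S,h), and
  l or l' pairs negatively with whichever of \<plusminus>(l - l') is positive.  But Fn pairs
  nonnegatively with every positive root, by induction on the height of a positive root; this
  induction needs rt(S,h) to be finite, which holds because h-perp is negative definite.
\<close>

lemma bil_add_left: "bil G (x + y) z = bil G x z + bil G y z"
  unfolding bil_def by (simp add: distrib_left distrib_right sum.distrib)

lemma bil_add_right: "bil G z (x + y) = bil G z x + bil G z y"
  unfolding bil_def by (simp add: distrib_left distrib_right sum.distrib)

lemma bil_diff_left: "bil G (x - y) z = bil G x z - bil G y z"
  unfolding bil_def by (simp add: left_diff_distrib right_diff_distrib sum_subtractf)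

lemma bil_diff_right: "bil G z (x - y) = bil G z x - bil G z y"
  unfolding bil_def by (simp add: left_diff_distrib right_diff_distrib sum_subtractf)

lemma bil_smult_left: "bil G (k *s x) y = k * bil G x y"
  unfolding bil_def by (simp add: sum_distrib_left mult.assoc)

lemma bil_smult_right: "bil G y (k *s x) = k * bil G y x"
  unfolding bil_def by (simp add: sum_distrib_left algebra_simps)

lemma bil_zero_left [simp]: "bil G 0 y = 0"
  unfolding bil_def by simp

lemma bil_sum_left: "finite T \<Longrightarrow> bil G (\<Sum>T) y = (\<Sum>t\<in>T. bil G t y)"
  by (induction T rule: finite_induct) (simp_all add: bil_add_left)

lemma bil_commute: "even_lattice G \<Longrightarrow> bil G x y = bil G y x"
  unfolding bil_def even_lattice_def by (subst sum.swap) (simp add: algebra_simps)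

lemmas bil_simps = bil_add_left bil_add_right bil_diff_left bil_diff_right
  bil_smult_left bil_smult_right

lemma bilR_add_left: "bilR G (x + y) z = bilR G x z + bilR G y z"
  unfolding bilR_def by (simp add: distrib_left distrib_right sum.distrib)

lemma bilR_add_right: "bilR G z (x + y) = bilR G z x + bilR G z y"
  unfolding bilR_def by (simp add: distrib_left distrib_right sum.distrib)

lemma bilR_diff_left: "bilR G (x - y) z = bilR G x z - bilR G y z"
  unfolding bilR_def by (simp add: left_diff_distrib right_diff_distrib sum_subtractf)

lemma bilR_diff_right: "bilR G z (x - y) = bilR G z x - bilR G z y"
  unfolding bilR_def by (simp add: left_diff_distrib right_diff_distrib sum_subtractf)

lemma bilR_scaleR_left: "bilR G (k *\<^sub>R x) y = k * bilR G x y"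
  unfolding bilR_def by (simp add: sum_distrib_left mult.assoc)

lemma bilR_scaleR_right: "bilR G y (k *\<^sub>R x) = k * bilR G y x"
  unfolding bilR_def by (simp add: sum_distrib_left algebra_simps)

lemma bilR_zero_left [simp]: "bilR G 0 y = 0"
  unfolding bilR_def by simp

lemma bilR_commute: "even_lattice G \<Longrightarrow> bilR G x y = bilR G y x"
  unfolding bilR_def even_lattice_def by (subst sum.swap) (simp add: algebra_simps)

lemmas bilR_simps = bilR_add_left bilR_add_right bilR_diff_left bilR_diff_right
  bilR_scaleR_left bilR_scaleR_right

lemma bilR_ivec: "bilR G (ivec x) (ivec y) = of_int (bil G x y)"
  unfolding bilR_def bil_def ivec_def by simp

lemma ivec_add: "ivec (x + y) = ivec x + ivec y"
  unfolding ivec_def by (simp add: vec_eq_iff)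

lemma ivec_diff: "ivec (x - y) = ivec x - ivec y"
  unfolding ivec_def by (simp add: vec_eq_iff)

lemma ivec_smult: "ivec (k *s x) = of_int k *\<^sub>R ivec x"
  unfolding ivec_def by (simp add: vec_eq_iff)

lemma ivec_eq_iff: "ivec x = ivec y \<longleftrightarrow> x = y"
  unfolding ivec_def by (simp add: vec_eq_iff)

lemma ivec_eq_0_iff: "ivec x = 0 \<longleftrightarrow> x = 0"
  unfolding ivec_def by (simp add: vec_eq_iff)

lemma polarizedD:
  assumes "polarized G h"
  shows "even_lattice G" and "hyperbolic G" and "bil G h h > 0"
  using assms unfolding polarized_def hyperbolic_def by auto

lemma bilR_nondegenerate:
  fixes G :: "int^'n^'n"
  assumes "even_lattice G" and "y \<noteq> 0"
  shows "\<exists>z. bilR G y z \<noteq> 0"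
proof -
  define M :: "real^'n^'n" where "M = (\<chi> i j. of_int (G$i$j))"
  have M_axis: "bilR G (axis i 1) z = (M *v z) $ i" for i z
  proof -
    have "bilR G (axis i 1) z = (\<Sum>k\<in>UNIV. if k = i then (\<Sum>j\<in>UNIV. of_int (G$k$j) * z$j) else 0)"
      unfolding bilR_def axis_def by (rule sum.cong) (auto simp: sum_distrib_left)
    then show ?thesis
      unfolding M_def matrix_vector_mult_def by simp
  qed
  have "det M = of_int (det G)"
    unfolding det_def M_def by (simp add: of_int_sum of_int_prod)
  then have "invertible M"
    using assms(1) unfolding invertible_det_nz even_lattice_def by simp
  then obtain B where "B ** M = mat 1"
    unfolding invertible_def by blast
  then have "M *v y \<noteq> 0"
    using matrix_left_invertible_ker assms(2) by blast
  then obtain i where "(M *v y) $ i \<noteq> 0"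
    by (auto simp: vec_eq_iff)
  then have "bilR G y (axis i 1) \<noteq> 0"
    using M_axis[of i y] bilR_commute[OF assms(1), of y "axis i 1"] by simp
  then show ?thesis ..
qed

lemma independent_if_positive_on_plane:
  assumes "u \<noteq> w"
    and pos: "\<And>a b. (a, b) \<noteq> (0, 0) \<Longrightarrow> bilR G (a *\<^sub>R u + b *\<^sub>R w) (a *\<^sub>R u + b *\<^sub>R w) > 0"
  shows "\<not> dependent {u, w}"
proof
  assume "dependent {u, w}"
  then obtain f where "\<exists>v\<in>{u, w}. f v \<noteq> 0" and "(\<Sum>v\<in>{u, w}. f v *\<^sub>R v) = 0"
    using real_vector.dependent_finite[of "{u, w}"] by auto
  then have "(f u, f w) \<noteq> (0, 0)" and "f u *\<^sub>R u + f w *\<^sub>R w = 0"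
    using assms(1) by auto
  then show False
    using pos[of "f u" "f w"] by simp
qed

lemma perp_not_positive:
  assumes "polarized G h" and "bilR G y (ivec h) = 0"
  shows "\<not> bilR G y y > 0"
proof
  assume yy: "bilR G y y > 0"
  let ?H = "ivec h"
  have HH: "bilR G ?H ?H > 0"
    using polarizedD(3)[OF assms(1)] by (simp add: bilR_ivec)
  have Hy: "bilR G ?H y = 0"
    using assms bilR_commute polarizedD(1) by metis
  have pos: "bilR G (a *\<^sub>R ?H + b *\<^sub>R y) (a *\<^sub>R ?H + b *\<^sub>R y) > 0"
    if "(a, b) \<noteq> (0, 0)" for a b
  proof -
    have "a\<^sup>2 > 0 \<or> b\<^sup>2 > 0"
      using that by auto
    then have "a\<^sup>2 * bilR G ?H ?H + b\<^sup>2 * bilR G y y > 0"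
      using HH yy by (metis add_nonneg_pos add_pos_nonneg mult_pos_pos less_imp_le
          mult_nonneg_nonneg zero_le_power2)
    then show ?thesis
      using assms(2) Hy by (simp add: bilR_simps algebra_simps power2_eq_square)
  qed
  have "?H \<noteq> y"
    using HH assms(2) by auto
  moreover have "\<not> dependent {?H, y}"
    using \<open>?H \<noteq> y\<close> pos by (rule independent_if_positive_on_plane)
  ultimately show False
    using polarizedD(2)[OF assms(1)] pos unfolding hyperbolic_def by blast
qed

lemma perp_negative:
  assumes pol: "polarized G h" and yh: "bilR G y (ivec h) = 0" and "y \<noteq> 0"
  shows "bilR G y y < 0"
proof (rule ccontr)
  assume "\<not> bilR G y y < 0"
  then have yy: "bilR G y y = 0"
    using perp_not_positive[OF pol yh] by simp
  let ?H = "ivec h"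
  have ev: "even_lattice G"
    using polarizedD(1)[OF pol] .
  have HH: "bilR G ?H ?H > 0"
    using polarizedD(3)[OF pol] by (simp add: bilR_ivec)
  obtain z where "bilR G y z \<noteq> 0"
    using bilR_nondegenerate[OF ev \<open>y \<noteq> 0\<close>] by blast
  define z' where "z' = z - (bilR G z ?H / bilR G ?H ?H) *\<^sub>R ?H"
  have z'H: "bilR G z' ?H = 0"
    unfolding z'_def using HH by (simp add: bilR_simps)
  have yz': "bilR G y z' \<noteq> 0"
    unfolding z'_def using yh \<open>bilR G y z \<noteq> 0\<close> by (simp add: bilR_simps)
  (* y is isotropic, so moving z' along y changes its square to any value, e.g. 1 *)
  define w where "w = z' + ((1 - bilR G z' z') / (2 * bilR G y z')) *\<^sub>R y"
  have "bilR G w w = bilR G z' z' + (1 - bilR G z' z')"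
    unfolding w_def using yy yz' bilR_commute[OF ev, of z' y] by (simp add: bilR_simps)
  moreover have "bilR G w ?H = 0"
    unfolding w_def using z'H yh by (simp add: bilR_simps)
  ultimately show False
    using perp_not_positive[OF pol] by fastforce
qed

lemma hodge_index_real:
  assumes pol: "polarized G h"
  defines "H \<equiv> ivec h"
  shows "bilR G H H * bilR G x x \<le> (bilR G x H)\<^sup>2"
    and "bilR G H H * bilR G x x = (bilR G x H)\<^sup>2 \<Longrightarrow> bilR G H H *\<^sub>R x = bilR G x H *\<^sub>R H"
proof -
  have HH: "bilR G H H > 0"
    using polarizedD(3)[OF pol] by (simp add: H_def bilR_ivec)
  define u where "u = bilR G H H *\<^sub>R x - bilR G x H *\<^sub>R H"
  have uH: "bilR G u H = 0"
    unfolding u_def by (simp add: bilR_simps)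
  have uu: "bilR G u u = bilR G H H * (bilR G H H * bilR G x x - (bilR G x H)\<^sup>2)"
    unfolding u_def using bilR_commute[OF polarizedD(1)[OF pol], of H x]
    by (simp add: bilR_simps algebra_simps power2_eq_square)
  have "bilR G H H * bilR G x x - (bilR G x H)\<^sup>2 \<le> 0 \<and>
    (bilR G H H * bilR G x x - (bilR G x H)\<^sup>2 = 0 \<longrightarrow> u = 0)"
  proof (cases "u = 0")
    case True
    then show ?thesis
      using uu HH by simp
  next
    case False
    then have "bilR G u u < 0"
      using perp_negative[OF pol] uH unfolding H_def by blast
    then show ?thesis
      using uu HH by (simp add: mult_less_0_iff)
  qed
  then show "bilR G H H * bilR G x x \<le> (bilR G x H)\<^sup>2"
    and "bilR G H H * bilR G x x = (bilR G x H)\<^sup>2 \<Longrightarrow> bilR G H H *\<^sub>R x = bilR G x H *\<^sub>R H"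
    unfolding u_def by auto
qed

lemma hodge_index:
  assumes "polarized G h"
  shows "bil G h h * bil G x x \<le> (bil G x h)\<^sup>2"
    and "bil G h h * bil G x x = (bil G x h)\<^sup>2 \<Longrightarrow> bil G h h *s x = bil G x h *s h"
proof -
  have "real_of_int (bil G h h * bil G x x) \<le> real_of_int ((bil G x h)\<^sup>2)"
    using hodge_index_real(1)[OF assms, of "ivec x"] by (simp add: bilR_ivec)
  then show "bil G h h * bil G x x \<le> (bil G x h)\<^sup>2"
    by linarith
  assume "bil G h h * bil G x x = (bil G x h)\<^sup>2"
  then have "real_of_int (bil G h h) * real_of_int (bil G x x) = (real_of_int (bil G x h))\<^sup>2"
    by (metis of_int_mult of_int_power)
  then have "ivec (bil G h h *s x) = ivec (bil G x h *s h)"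
    using hodge_index_real(2)[OF assms, of "ivec x"] by (simp add: bilR_ivec ivec_smult)
  then show "bil G h h *s x = bil G x h *s h"
    by (simp add: ivec_eq_iff)
qed

text \<open>h^2 times the form with the sign of its h-component reversed.\<close>
lemma reflected_form_positive:
  assumes pol: "polarized G h" and "x \<noteq> 0"
  shows "2 * (bilR G x (ivec h))\<^sup>2 - bilR G (ivec h) (ivec h) * bilR G x x > 0"
proof (cases "bilR G x (ivec h) = 0")
  case True
  then show ?thesis
    using perp_negative[OF pol True \<open>x \<noteq> 0\<close>] polarizedD(3)[OF pol]
    by (simp add: bilR_ivec mult_pos_neg)
next
  case False
  then show ?thesis
    using hodge_index_real(1)[OF pol, of x] by (smt (verit) zero_less_power2)
qed

lemma quadratic_lower_bound:
  fixes Q :: "'a::euclidean_space \<Rightarrow> real"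
  assumes cont: "continuous_on UNIV Q" and pos: "\<And>x. x \<noteq> 0 \<Longrightarrow> Q x > 0"
    and scale: "\<And>a x. Q (a *\<^sub>R x) = a\<^sup>2 * Q x"
  shows "\<exists>k>0. \<forall>x. k * (norm x)\<^sup>2 \<le> Q x"
proof -
  obtain x0 where x0: "x0 \<in> sphere 0 1" and min: "\<And>y. y \<in> sphere 0 1 \<Longrightarrow> Q x0 \<le> Q y"
    using continuous_attains_inf[OF compact_sphere _ continuous_on_subset[OF cont]]
    by (metis sphere_eq_empty subset_UNIV zero_less_one not_less_iff_gr_or_eq)
  have "Q x0 * (norm x)\<^sup>2 \<le> Q x" for x
  proof (cases "x = 0")
    case True
    then show ?thesis
      using scale[of 0 0] by simp
  next
    case False
    then have "Q x0 \<le> Q (inverse (norm x) *\<^sub>R x)"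
      by (intro min) simp
    also have "\<dots> = Q x / (norm x)\<^sup>2"
      by (simp add: scale power_inverse divide_inverse)
    finally show ?thesis
      using False by (simp add: field_simps)
  qed
  moreover have "x0 \<noteq> 0"
    using x0 by auto
  then have "Q x0 > 0"
    by (rule pos)
  ultimately show ?thesis
    by blast
qed

lemma finite_int_vectors_norm_le: "finite {x :: int^'n. norm (ivec x) \<le> R}"
proof (rule finite_subset)
  let ?B = "\<lceil>R\<rceil>"
  show "{x :: int^'n. norm (ivec x) \<le> R} \<subseteq> vec_nth -` (UNIV \<rightarrow>\<^sub>E {-?B..?B})"
  proof
    fix x :: "int^'n"
    assume "x \<in> {x. norm (ivec x) \<le> R}"
    then have "\<bar>x $ i\<bar> \<le> ?B" for i
      using component_le_norm_cart[of "ivec x" i] unfolding ivec_def by simp linarith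
    then show "x \<in> vec_nth -` (UNIV \<rightarrow>\<^sub>E {-?B..?B})"
      by (simp add: PiE_iff abs_le_iff minus_le_iff)
  qed
  show "finite (vec_nth -` (UNIV \<rightarrow>\<^sub>E {-?B..?B}) :: (int^'n) set)"
    by (intro finite_vimageI finite_PiE) (auto simp: inj_def vec_eq_iff)
qed

lemma finite_root0:
  fixes G :: "int^'n^'n"
  assumes pol: "polarized G h"
  shows "finite (root G h 0)"
proof -
  define Q where "Q x = 2 * (bilR G x (ivec h))\<^sup>2 - bilR G (ivec h) (ivec h) * bilR G x x"
    for x :: "real^'n"
  have "\<exists>k>0. \<forall>x. k * (norm x)\<^sup>2 \<le> Q x"
  proof (rule quadratic_lower_bound)
    show "continuous_on UNIV Q"
      unfolding Q_def bilR_def by (intro continuous_intros)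
    show "Q x > 0" if "x \<noteq> 0" for x
      unfolding Q_def using reflected_form_positive[OF pol that] .
    show "Q (a *\<^sub>R x) = a\<^sup>2 * Q x" for a x
      unfolding Q_def by (simp add: bilR_simps power2_eq_square algebra_simps)
  qed
  then obtain k where "k > 0" and lower: "\<And>x. k * (norm x)\<^sup>2 \<le> Q x"
    by blast
  have "root G h 0 \<subseteq> {x. norm (ivec x) \<le> sqrt (2 * bil G h h / k)}"
  proof safe
    fix r assume "r \<in> root G h 0"
    then have "Q (ivec r) = 2 * bil G h h"
      unfolding Q_def root_def by (simp add: bilR_ivec)
    then have "(norm (ivec r))\<^sup>2 \<le> 2 * bil G h h / k"
      using lower[of "ivec r"] \<open>k > 0\<close> by (simp add: field_simps)
    then show "norm (ivec r) \<le> sqrt (2 * bil G h h / k)"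
      using real_le_rsqrt by blast
  qed
  then show ?thesis
    using finite_int_vectors_norm_le finite_subset by blast
qed

lemma nonneg_if_nonneg_on_indecomposables:
  fixes ht :: "'a::plus \<Rightarrow> real" and f :: "'a \<Rightarrow> 'b::linordered_ab_group_add"
  assumes "finite P" and "e \<in> P"
    and ht_pos: "\<And>e. e \<in> P \<Longrightarrow> ht e > 0"
    and ht_add: "\<And>a b. a \<in> P \<Longrightarrow> b \<in> P \<Longrightarrow> ht (a + b) = ht a + ht b"
    and f_add: "\<And>a b. a \<in> P \<Longrightarrow> b \<in> P \<Longrightarrow> f (a + b) = f a + f b"
    and indecomposable: "\<And>e. e \<in> P \<Longrightarrow> \<not> (\<exists>a\<in>P. \<exists>b\<in>P. e = a + b) \<Longrightarrow> f e \<ge> 0"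
  shows "f e \<ge> 0"
proof (rule ccontr)
  assume "\<not> f e \<ge> 0"
  define X where "X = {e \<in> P. f e < 0}"
  have "finite X" and "X \<noteq> {}"
    using assms(1,2) \<open>\<not> f e \<ge> 0\<close> unfolding X_def by auto
  then obtain e0 where "is_arg_min ht (\<lambda>x. x \<in> X) e0"
    using ex_is_arg_min_if_finite by blast
  then have e0: "e0 \<in> X" and min: "\<And>x. x \<in> X \<Longrightarrow> \<not> ht x < ht e0"
    unfolding is_arg_min_def by auto
  have "e0 \<in> P" and "f e0 < 0"
    using e0 unfolding X_def by auto
  then obtain a b where ab: "a \<in> P" "b \<in> P" "e0 = a + b"
    using indecomposable[of e0] by (meson not_le)
  then have "f a + f b < 0"
    using \<open>f e0 < 0\<close> f_add by simp
  then have "f a < 0 \<or> f b < 0"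
    using add_nonneg_nonneg[of "f a" "f b"] by (auto simp: not_less[symmetric])
  then have "a \<in> X \<or> b \<in> X"
    using ab unfolding X_def by auto
  moreover have "ht a < ht e0" and "ht b < ht e0"
    using ab ht_add[of a b] ht_pos[of a] ht_pos[of b] by auto
  ultimately show False
    using min by blast
qed

lemma FnD:
  assumes "l \<in> Fn G h c"
  shows "bil G l l = -2" and "bil G l h = 1"
  using assms unfolding Fn_def root_def by auto

lemma Fn_nonneg_on_pos_roots:
  assumes "polarized G h" and "l \<in> Fn G h c" and "e \<in> pos_roots G h c"
  shows "bil G l e \<ge> 0"
proof (rule nonneg_if_nonneg_on_indecomposables[where ht = "\<lambda>e. bilR G c (ivec e)"])
  show "finite (pos_roots G h c)"
    using finite_root0[OF assms(1)] unfolding pos_roots_def by (rule finite_subset[rotated]) auto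
  show "bil G l e' \<ge> 0" if "e' \<in> pos_roots G h c"
    and "\<not> (\<exists>a\<in>pos_roots G h c. \<exists>b\<in>pos_roots G h c. e' = a + b)" for e'
    using that assms(2) unfolding Fn_def simple_roots_def by auto
qed (use assms(3) in \<open>auto simp: pos_roots_def ivec_add bilR_add_right bil_add_right\<close>)

lemma Fn_products_nonneg:
  assumes pol: "polarized G h" and generic: "weyl_generic G h c"
    and l1: "l1 \<in> Fn G h c" and l2: "l2 \<in> Fn G h c" and "l1 \<noteq> l2"
  shows "bil G l1 l2 \<ge> 0"
proof (rule ccontr)
  assume "\<not> bil G l1 l2 \<ge> 0"
  have sym: "bil G l2 l1 = bil G l1 l2"
    using bil_commute[OF polarizedD(1)[OF pol]] by metis
  have not_pos: "l - l' \<notin> pos_roots G h c"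
    if "l \<in> Fn G h c" and "l' \<in> Fn G h c" and "bil G l l' = -1" for l l'
  proof
    assume "l - l' \<in> pos_roots G h c"
    then have "bil G l (l - l') \<ge> 0"
      using Fn_nonneg_on_pos_roots[OF pol that(1)] by blast
    then show False
      using FnD[OF that(1)] that(3) by (simp add: bil_diff_right)
  qed
  have "bil G (l1 - l2) h = 0" and "bil G (l1 - l2) (l1 - l2) = -4 - 2 * bil G l1 l2"
    using FnD[OF l1] FnD[OF l2] sym by (simp_all add: bil_simps)
  moreover have "bilR G (ivec (l1 - l2)) (ivec (l1 - l2)) < 0"
    using perp_negative[OF pol, of "ivec (l1 - l2)"] calculation(1) \<open>l1 \<noteq> l2\<close>
    by (simp add: bilR_ivec ivec_eq_0_iff)
  ultimately have b: "bil G l1 l2 = -1"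
    using \<open>\<not> bil G l1 l2 \<ge> 0\<close> by (simp add: bilR_ivec)
  then have "l1 - l2 \<in> root G h 0" "l2 - l1 \<in> root G h 0"
    using FnD[OF l1] FnD[OF l2] sym unfolding root_def by (simp_all add: bil_simps)
  moreover have "bilR G c (ivec (l2 - l1)) = - bilR G c (ivec (l1 - l2))"
    by (simp add: ivec_diff bilR_simps)
  ultimately have "l1 - l2 \<in> pos_roots G h c \<or> l2 - l1 \<in> pos_roots G h c"
    using generic unfolding weyl_generic_def pos_roots_def by force
  then show False
    using not_pos l1 l2 b sym by metis
qed

lemma finite_card_less_if_no_subset_of_card:
  assumes "\<And>T. T \<subseteq> S \<Longrightarrow> finite T \<Longrightarrow> card T = n \<Longrightarrow> False"
  shows "finite S \<and> card S < n"
proof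
  show "finite S"
  proof (rule ccontr)
    assume "infinite S"
    then obtain T where "finite T" and "card T = n" and "T \<subseteq> S"
      using infinite_arbitrarily_large by blast
    then show False
      using assms by blast
  qed
  show "card S < n"
  proof (rule ccontr)
    assume "\<not> card S < n"
    then obtain T where "T \<subseteq> S" and "card T = n" and "finite T"
      using obtain_subset_with_card_n[of n S] by auto
    then show False
      using assms by blast
  qed
qed

locale degree8_vertex_pair =
  fixes G :: "int^'n^'n" and h :: "int^'n" and c :: "real^'n" and v1 v2 :: "int^'n"
  assumes polarized: "polarized G h" and degree8: "bil G h h = 8"
    and admissible: "admissible2 G h" and generic: "weyl_generic G h c"
    and v1: "v1 \<in> Fn G h c" and v2: "v2 \<in> Fn G h c" and distinct: "v1 \<noteq> v2"
begin

abbreviation common_star :: "(int^'n) set" where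
  "common_star \<equiv> Star G h c v1 \<inter> Star G h c v2"

lemma bil_sym: "bil G x y = bil G y x"
  using bil_commute[OF polarizedD(1)[OF polarized]] .

lemma hodge8: "8 * bil G x x \<le> (bil G x h)\<^sup>2"
  using hodge_index(1)[OF polarized] degree8 by simp

lemma hodge8_eq:
  assumes "8 * bil G x x = (bil G x h)\<^sup>2"
  shows "8 * bil G x y = bil G x h * bil G h y"
proof -
  have "8 *s x = bil G x h *s h"
    using hodge_index(2)[OF polarized] assms degree8 by simp
  then have "bil G (8 *s x) y = bil G (bil G x h *s h) y"
    by simp
  then show ?thesis
    by (simp add: bil_smult_left)
qed

lemmas vertex_facts = FnD[OF v1] FnD[OF v2] bil_sym[of h v1] bil_sym[of h v2] bil_sym[of v2 v1]
  degree8

lemma vertex_product_cases: "bil G v1 v2 = 0 \<or> bil G v1 v2 = 1"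
proof -
  have "bil G (v1 + v2) (v1 + v2) = 2 * bil G v1 v2 - 4" and "bil G (v1 + v2) h = 2"
    using vertex_facts by (simp_all add: bil_simps)
  then have "bil G v1 v2 \<le> 2" and "bil G v1 v2 = 2 \<longrightarrow> isotropic G h 2 (v1 + v2)"
    using hodge8[of "v1 + v2"] unfolding isotropic_def by simp_all
  moreover have "bil G v1 v2 \<ge> 0"
    using Fn_products_nonneg[OF polarized generic v1 v2 distinct] .
  ultimately show ?thesis
    using admissible unfolding admissible2_def by auto
qed

lemma common_starD:
  assumes "l \<in> common_star"
  shows "l \<in> Fn G h c" and "bil G l v1 = 1" and "bil G l v2 = 1" and "bil G v1 l = 1"
    and "bil G v2 l = 1" and "bil G l l = -2" and "bil G l h = 1" and "bil G h l = 1"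
proof -
  have "l \<in> Fn G h c" and "bil G l v1 = 1" and "bil G l v2 = 1"
    using assms unfolding Star_def by auto
  then show "l \<in> Fn G h c" and "bil G l v1 = 1" and "bil G l v2 = 1" and "bil G v1 l = 1"
    and "bil G v2 l = 1" and "bil G l l = -2" and "bil G l h = 1" and "bil G h l = 1"
    using FnD[of l] bil_sym[of v1 l] bil_sym[of v2 l] bil_sym[of h l] by simp_all
qed

lemma common_star_orthogonal:
  assumes l1: "l1 \<in> common_star" and l2: "l2 \<in> common_star" and "l1 \<noteq> l2"
  shows "bil G l1 l2 = 0"
proof (rule ccontr)
  assume "bil G l1 l2 \<noteq> 0"
  moreover have "bil G l1 l2 \<ge> 0"
    using Fn_products_nonneg[OF polarized generic] common_starD(1) assms by blast
  moreover have "bil G (l1 + l2 + v1) (l1 + l2 + v1) = 2 * bil G l1 l2 - 2"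
    and "bil G (l1 + l2 + v1) h = 3"
    using common_starD[OF l1] common_starD[OF l2] vertex_facts bil_sym[of l2 l1]
    by (simp_all add: bil_simps)
  ultimately have b: "bil G l1 l2 = 1"
    using hodge8[of "l1 + l2 + v1"] by simp
  define x where "x = l1 + l2 + v1 + v2"
  have "bil G x x = 2 * bil G v1 v2 + 2" and xh: "bil G x h = 4" and xl: "bil G x l1 = 1"
    unfolding x_def using common_starD[OF l1] common_starD[OF l2] vertex_facts b bil_sym[of l2 l1]
    by (simp_all add: bil_simps)
  then have "8 * bil G x x = (bil G x h)\<^sup>2"
    using hodge8[of x] vertex_product_cases by auto
  then show False
    using hodge8_eq[of x l1] xh xl common_starD(8)[OF l1] by simp
qed

lemma bil_sum_common_star:
  assumes "T \<subseteq> common_star" and "finite T"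
  shows "bil G (\<Sum>T) h = card T" and "bil G (\<Sum>T) v1 = card T" and "bil G (\<Sum>T) v2 = card T"
    and "l \<in> T \<Longrightarrow> bil G (\<Sum>T) l = -2" and "bil G (\<Sum>T) (\<Sum>T) = -2 * card T"
proof -
  have in_star: "t \<in> common_star" if "t \<in> T" for t
    using that assms(1) by blast
  have "bil G t l = (if t = l then -2 else 0)" if "t \<in> T" and "l \<in> T" for t l
    using common_starD(6) common_star_orthogonal in_star that by simp
  then have sum_l: "bil G (\<Sum>T) l = -2" if "l \<in> T" for l
    using that assms(2) by (simp add: bil_sum_left)
  show "l \<in> T \<Longrightarrow> bil G (\<Sum>T) l = -2"
    by (rule sum_l)
  show "bil G (\<Sum>T) h = card T" and "bil G (\<Sum>T) v1 = card T" and "bil G (\<Sum>T) v2 = card T"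
    using assms(2) common_starD(2,3,7)[OF in_star] by (simp_all add: bil_sum_left)
  have "bil G (\<Sum>T) (\<Sum>T) = (\<Sum>t\<in>T. bil G t (\<Sum>T))"
    by (rule bil_sum_left[OF assms(2)])
  also have "\<dots> = (\<Sum>t\<in>T. bil G (\<Sum>T) t)"
    by (rule sum.cong[OF refl bil_sym])
  also have "\<dots> = -2 * card T"
    using sum_l by simp
  finally show "bil G (\<Sum>T) (\<Sum>T) = -2 * card T" .
qed

lemma common_star_adjacent:
  assumes "bil G v1 v2 = 1"
  shows "finite common_star \<and> card common_star < 2"
proof (rule finite_card_less_if_no_subset_of_card)
  fix T
  assume T: "T \<subseteq> common_star" "finite T" "card T = 2"
  then obtain l where l: "l \<in> T"
    by fastforce
  then have l_star: "l \<in> common_star"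
    using T(1) by blast
  define x where "x = v1 + v2 + \<Sum>T"
  have "bil G x x = 2" and "bil G x h = 4" and "bil G x l = 0"
    unfolding x_def
    using bil_sum_common_star[OF T(1,2)] l T(3) assms vertex_facts common_starD[OF l_star]
      bil_sym[of v1 "\<Sum>T"] bil_sym[of v2 "\<Sum>T"] bil_sym[of h "\<Sum>T"]
    by (auto simp: bil_simps)
  then show False
    using hodge8_eq[of x l] common_starD(8)[OF l_star] by simp
qed

lemma common_star_adjacent_admissible3:
  assumes "bil G v1 v2 = 1" and "admissible3 G h"
  shows "common_star = {}"
proof (rule ccontr)
  assume "common_star \<noteq> {}"
  then obtain l where l: "l \<in> common_star"
    by blast
  have "isotropic G h 3 (v1 + v2 + l)"
    unfolding isotropic_def using assms(1) vertex_facts common_starD[OF l]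
    by (simp add: bil_simps)
  then show False
    using assms(2) unfolding admissible3_def by blast
qed

lemma common_star_nonadjacent:
  assumes "bil G v1 v2 = 0"
  shows "finite common_star \<and> card common_star < 4"
proof (rule finite_card_less_if_no_subset_of_card)
  fix T
  assume T: "T \<subseteq> common_star" "finite T" "card T = 4"
  then obtain l where l: "l \<in> T"
    by fastforce
  then have l_star: "l \<in> common_star"
    using T(1) by blast
  define x where "x = 2 *s (v1 + v2) + \<Sum>T"
  have "bil G x x = 8" and "bil G x h = 8" and "bil G x l = 2"
    unfolding x_def
    using bil_sum_common_star[OF T(1,2)] l T(3) assms vertex_facts common_starD[OF l_star]
      bil_sym[of v1 "\<Sum>T"] bil_sym[of v2 "\<Sum>T"] bil_sym[of h "\<Sum>T"]
    by (auto simp: bil_simps)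
  then show False
    using hodge8_eq[of x l] common_starD(8)[OF l_star] by simp
qed

lemma common_star_nonadjacent_admissible3:
  assumes "bil G v1 v2 = 0" and "admissible3 G h"
  shows "card common_star < 3"
proof -
  have "finite common_star \<and> card common_star < 3"
  proof (rule finite_card_less_if_no_subset_of_card)
    fix T
    assume T: "T \<subseteq> common_star" "finite T" "card T = 3"
    have "isotropic G h 3 (h - (v1 + v2 + \<Sum>T))"
      unfolding isotropic_def
      using bil_sum_common_star[OF T(1,2)] T(3) assms(1) vertex_facts
        bil_sym[of v1 "\<Sum>T"] bil_sym[of v2 "\<Sum>T"] bil_sym[of h "\<Sum>T"]
      by (simp add: bil_simps)
    then show False
      using assms(2) unfolding admissible3_def by blast
  qed
  then show ?thesis
    by blast
qed

end

theorem lemma5p2: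
  fixes G :: "int^'n^'n" and h :: "int^'n" and c :: "real^'n" and v1 v2 :: "int^'n"
  assumes "polarized G h" and "bil G h h = 8" and "admissible2 G h"
    and "weyl_generic G h c"
    and "v1 \<in> Fn G h c" and "v2 \<in> Fn G h c" and "v1 \<noteq> v2"
  shows "(\<forall>l1\<in>Star G h c v1 \<inter> Star G h c v2. \<forall>l2\<in>Star G h c v1 \<inter> Star G h c v2.
            l1 \<noteq> l2 \<longrightarrow> bil G l1 l2 = 0)
    \<and> finite (Star G h c v1 \<inter> Star G h c v2)
    \<and> (bil G v1 v2 = 1 \<longrightarrow> card (Star G h c v1 \<inter> Star G h c v2) \<le> 1)
    \<and> (bil G v1 v2 = 0 \<longrightarrow> card (Star G h c v1 \<inter> Star G h c v2) \<le> 3)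
    \<and> (admissible3 G h \<longrightarrow>
         (bil G v1 v2 = 1 \<longrightarrow> card (Star G h c v1 \<inter> Star G h c v2) < 1)
       \<and> (bil G v1 v2 = 0 \<longrightarrow> card (Star G h c v1 \<inter> Star G h c v2) < 3))"
proof -
  interpret degree8_vertex_pair G h c v1 v2
    using assms by unfold_locales
  have "finite common_star"
    using vertex_product_cases common_star_adjacent common_star_nonadjacent by blast
  then show ?thesis
    using common_star_orthogonal common_star_adjacent common_star_nonadjacent
      common_star_adjacent_admissible3 common_star_nonadjacent_admissible3
    by auto
qed

end
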